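(* Let $\alpha>0$, $h>0$, $D_x>0$, $D_y>0$, $A>0$, and let $x_m\sim\mathrm{Unif}[0,D_x]$, $y_m\sim\mathrm{Unif}[-D_y/2,D_y/2]$ be independent. Then the average rate $R_p=\mathbb{E}\left[\log_2\left(1+\frac{Ae^{-\alpha x_m}}{y_m^2+h^2}\right)\right]$ equals $$R_p=\frac{1}{D_xD_y}\Bigg(\frac{D_y}{\alpha\ln 2}\left(\mathrm{Li}_2\!\left(\frac{-Ae^{-\alpha D_x}}{h^2+\frac{D_y^2}{4}}\right)-\mathrm{Li}_2\!\left(\frac{-A}{h^2+\frac{D_y^2}{4}}\right)\right)-\frac{4hD_x}{\ln 2}\tan^{-1}\!\left(\frac{D_y}{2h}\right)-\frac{8}{\alpha\ln 2}\Big[F(x)\Big]_{\sqrt{A+h^2}}^{\sqrt{Ae^{-\alpha D_x}+h^2}}\Bigg),$$ where $[F(x)]_a^b=F(b)-F(a)$ and, for $x>h$, $$F(x)=\frac{D_y}{4}\ln\left(\frac{D_y^2}{4}+x^2\right)+x\tan^{-1}\!\left(\frac{D_y}{2x}\right)+\frac{h}{2}\tan^{-1}\!\left(\frac{D_y}{2x}\right)\ln\left(\frac{x-h}{x+h}\right)+\frac{h}{4}\big(z(x,h)-z(x,-h)\big),$$ $$z(x,y)=2\ln(x-y)\left(\tan^{-1}\!\left(\frac{2x}{D_y}\right)-\tan^{-1}\!\left(\frac{2y}{D_y}\right)\right)+2\,\mathrm{Im}\left\{\mathrm{Li}_2\!\left(\frac{y-x}{y-j\frac{D_y}{2}}\r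ight)\right\}.$$
   Context: This is the ergodic rate of a single-pinching-antenna system where the antenna is placed at $x_p=x_m$ directly above the user's $x$-coordinate on a waveguide at height $h$ with absorption coefficient $\alpha$; $A=\frac{\eta P_t}{\sigma^2}$ with $\eta,P_t,\sigma^2>0$. $\mathrm{Li}_2$ is the dilogarithm, $\mathrm{Li}_2(w)=-\int_0^w\frac{\ln(1-u)}{u}\,du$ (principal branch for complex arguments), $j$ is the imaginary unit, and $\mathrm{Im}$ denotes the imaginary part. *)

theory Defs
  imports "HOL-Analysis.Analysis" "HOL-Complex_Analysis.Complex_Analysis"
begin

definition Li2 :: "complex \<Rightarrow> complex" where
  "Li2 w = - contour_integral (linepath 0 w) (\<lambda>u. Ln (1 - u) / u)"

definition zfun :: "real \<Rightarrow> real \<Rightarrow> real \<Rightarrow> real" where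
  "zfun Dy x y = 2 * ln (x - y) * (arctan (2 * x / Dy) - arctan (2 * y / Dy))
      + 2 * Im (Li2 ((complex_of_real (y - x)) / (complex_of_real y - \<i> * complex_of_real (Dy / 2))))"

definition Ffun :: "real \<Rightarrow> real \<Rightarrow> real \<Rightarrow> real" where
  "Ffun Dy h x = Dy / 4 * ln (Dy^2 / 4 + x^2) + x * arctan (Dy / (2 * x))
      + h / 2 * arctan (Dy / (2 * x)) * ln ((x - h) / (x + h))
      + h / 4 * (zfun Dy x h - zfun Dy x (- h))"

end

(*
  The inner integral over y_m is elementary: with s = sqrt (B + h^2),
  log2 (1 + B / (y^2 + h^2)) = (ln (y^2 + s^2) - ln (y^2 + h^2)) / ln 2, and
  y ln (y^2 + a^2) - 2 y + 2 a arctan (y / a) is a primitive of ln (y^2 + a^2).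
  The outer integral over x_m is then checked by differentiating the closed form in D_x:
  the dilogarithm term contributes ln (1 - w) through Li2' w = - ln (1 - w) / w, and the
  F term contributes s arctan (D_y / (2 s)) through F' s = s^2 arctan (D_y / (2 s)) / (s^2 - h^2),
  which in turn rests on d/dx z(x, y) = 4 D_y ln (x - y) / (D_y^2 + 4 x^2); there the imaginary
  part of the dilogarithm supplies the argument of (x - j D_y/2) / (y - j D_y/2).
  Li2 is differentiable because, by Cauchy's theorem on the star-shaped slit plane,
  the integral along segments from 0 is a primitive of its integrand.
*)
theory Submission
  imports Defs
begin

definition slit_plane :: "complex set" where
  "slit_plane = {w. 1 - w \<notin> \<real>\<^sub>\<le>\<^sub>0}"

lemma open_slit_plane: "open slit_plane"
proof -
  have "slit_plane = (\<lambda>w. 1 - w) -` (- \<real>\<^sub>\<le>\<^sub>0)" by (auto simp: slit_plane_def)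
  then show ?thesis
    by (metis closed_nonpos_Reals_complex continuous_on_op_minus open_Compl open_vimage)
qed

lemma of_real_in_slit_plane: "x < 1 \<Longrightarrow> complex_of_real x \<in> slit_plane"
  by (simp add: slit_plane_def complex_nonpos_Reals_iff)

lemma nonreal_in_slit_plane: "Im w \<noteq> 0 \<Longrightarrow> w \<in> slit_plane"
  by (simp add: slit_plane_def complex_nonpos_Reals_iff)

lemma closed_segment_zero_subset_slit_plane:
  assumes "w \<in> slit_plane" shows "closed_segment 0 w \<subseteq> slit_plane"
proof
  fix u assume "u \<in> closed_segment 0 w"
  then obtain t where t: "0 \<le> t" "t \<le> 1" and u: "u = t *\<^sub>R w"
    by (auto simp: closed_segment_def)
  show "u \<in> slit_plane"
  proof (rule ccontr)
    assume "u \<notin> slit_plane"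
    then have "Im u = 0" "1 \<le> Re u" by (auto simp: slit_plane_def complex_nonpos_Reals_iff)
    moreover from this u have "t \<noteq> 0" by auto
    ultimately have "Im w = 0" "1 \<le> t * Re w" using u by auto
    moreover from this t have "1 \<le> Re w"
      by (smt (verit, best) mult_cancel_right1 mult_left_le)
    ultimately show False using assms by (simp add: slit_plane_def complex_nonpos_Reals_iff)
  qed
qed

text \<open>Filling in the removable singularity at 0 makes the integrand continuous on the whole
  slit plane, as Cauchy's theorem for triangles requires.\<close>
definition Li2_integrand :: "complex \<Rightarrow> complex" where
  "Li2_integrand u = (if u = 0 then -1 else Ln (1 - u) / u)"

lemma tendsto_Ln_one_minus_div_at_0: "((\<lambda>u. Ln (1 - u) / u) \<longlongrightarrow> -1) (at 0)"
proof -
  have "((\<lambda>u. Ln (1 - u)) has_field_derivative -1) (at 0)"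
    by (auto intro!: derivative_eq_intros)
  then show ?thesis by (simp add: has_field_derivative_iff)
qed

lemma eventually_Li2_integrand_eq:
  "x \<noteq> 0 \<Longrightarrow> \<forall>\<^sub>F u in nhds x. Li2_integrand u = Ln (1 - u) / u"
  by (auto elim!: eventually_mono[OF t1_space_nhds] simp: Li2_integrand_def)

lemma continuous_on_Li2_integrand: "continuous_on slit_plane Li2_integrand"
proof (clarsimp simp: continuous_on_eq_continuous_at open_slit_plane)
  fix x assume x: "x \<in> slit_plane"
  show "isCont Li2_integrand x"
  proof (cases "x = 0")
    case True
    have "(Li2_integrand \<longlongrightarrow> -1) (at 0)"
      by (rule Lim_transform_eventually[OF tendsto_Ln_one_minus_div_at_0])
        (auto simp: eventually_at_filter Li2_integrand_def)
    then show ?thesis using True by (simp add: continuous_at Li2_integrand_def)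
  next
    case False
    have "isCont (\<lambda>u. Ln (1 - u) / u) x"
      using False x by (auto simp: slit_plane_def intro!: continuous_intros)
    then show ?thesis using isCont_cong[OF eventually_Li2_integrand_eq[OF False]] by simp
  qed
qed

lemma field_differentiable_Li2_integrand:
  assumes "x \<in> slit_plane" "x \<noteq> 0"
  shows "Li2_integrand field_differentiable at x"
proof -
  have "Li2_integrand holomorphic_on slit_plane - {0}"
    by (rule holomorphic_transform[of "\<lambda>u. Ln (1 - u) / u"])
      (auto simp: slit_plane_def Li2_integrand_def intro!: holomorphic_intros)
  then show ?thesis
    using assms open_slit_plane by (auto intro: holomorphic_on_imp_differentiable_at)
qed

lemma Li2_integrand_primitive:
  assumes "w \<in> slit_plane"
  shows "((\<lambda>z. contour_integral (linepath 0 z) Li2_integrand) has_field_derivative Li2_integrand w) (at w)"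
proof (rule triangle_contour_integrals_starlike_primitive
    [OF continuous_on_Li2_integrand _ open_slit_plane assms closed_segment_zero_subset_slit_plane])
  show "0 \<in> slit_plane" by (simp add: slit_plane_def)
  fix b c assume "closed_segment b c \<subseteq> slit_plane"
  then have hull: "convex hull {0, b, c} \<subseteq> slit_plane"
    using \<open>0 \<in> slit_plane\<close> closed_segment_zero_subset_slit_plane by (simp add: starlike_convex_subset)
  have "(Li2_integrand has_contour_integral 0) (linepath 0 b +++ linepath b c +++ linepath c 0)"
  proof (rule Cauchy_theorem_triangle_cofinite[where S = "{0}"])
    show "continuous_on (convex hull {0, b, c}) Li2_integrand"
      using hull continuous_on_subset[OF continuous_on_Li2_integrand] by blast
    show "\<And>x. x \<in> interior (convex hull {0, b, c}) - {0} \<Longrightarrow> Li2_integrand field_differentiable at x"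
      using hull interior_subset field_differentiable_Li2_integrand by blast
  qed auto
  then show "contour_integral (linepath 0 b) Li2_integrand + contour_integral (linepath b c) Li2_integrand
      + contour_integral (linepath c 0) Li2_integrand = 0"
    by (rule has_chain_integral_chain_integral3)
qed

lemma Li2_eq_contour_integral_Li2_integrand:
  "Li2 w = - contour_integral (linepath 0 w) Li2_integrand"
proof (cases "w = 0")
  case False
  have "((\<lambda>u. Ln (1 - u) / u) has_contour_integral i) (linepath 0 w)
      \<longleftrightarrow> (Li2_integrand has_contour_integral i) (linepath 0 w)" for i
    unfolding has_contour_integral_def
    by (rule has_integral_spike_finite_eq[of "{0}"]) (use False in \<open>auto simp: Li2_integrand_def linepath_def\<close>)
  then show ?thesis
    unfolding Li2_def contour_integral_def contour_integrable_on_def by simp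
qed (simp add: Li2_def)

lemma has_field_derivative_Li2:
  "w \<in> slit_plane \<Longrightarrow> (Li2 has_field_derivative - Li2_integrand w) (at w)"
  using DERIV_minus[OF Li2_integrand_primitive]
  by (simp add: Li2_eq_contour_integral_Li2_integrand[abs_def])

lemma has_real_derivative_Re_Li2_of_real:
  assumes f: "(f has_real_derivative f') (at t)" and "f t < 1" "f t \<noteq> 0"
  shows "((\<lambda>x. Re (Li2 (of_real (f x)))) has_real_derivative - f' * ln (1 - f t) / f t) (at t)"
proof -
  have "((Li2 \<circ> (\<lambda>x. of_real (f x))) has_vector_derivative
      of_real f' * - Li2_integrand (of_real (f t))) (at t)"
    using assms by (intro field_vector_diff_chain_at has_vector_derivative_of_real f
        has_field_derivative_Li2 of_real_in_slit_plane)
  moreover have "Li2_integrand (of_real (f t)) = of_real (ln (1 - f t) / f t)"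
    using assms by (simp add: Li2_integrand_def Ln_of_real[symmetric])
  ultimately show ?thesis
    using has_field_derivative_Re by (fastforce simp: o_def)
qed

lemma Complex_neg_Im_eq_rcis:
  assumes "d > 0"
  shows "Complex x (- d) = rcis (d * sqrt (1 + (x / d)^2)) (arctan (x / d) - pi / 2)"
proof -
  have "sqrt (1 + (x / d)^2) > 0" by (simp add: add_pos_nonneg)
  then show ?thesis
    using assms by (simp add: complex_eq_iff cos_diff sin_diff sin_arctan cos_arctan)
qed

lemma Arg_Complex_neg_Im_divide:
  assumes "d > 0"
  shows "Arg (Complex x (- d) / Complex y (- d)) = arctan (x / d) - arctan (y / d)"
proof (rule Arg_unique')
  have "sqrt (1 + t^2) > 0" for t :: real by (simp add: add_pos_nonneg)
  then show "(d * sqrt (1 + (x / d)^2)) / (d * sqrt (1 + (y / d)^2)) > 0"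
    using assms by simp
  show "arctan (x / d) - arctan (y / d) \<in> {- pi<..pi}"
    using arctan_bounded[of "x / d"] arctan_bounded[of "y / d"] by auto
qed (simp add: Complex_neg_Im_eq_rcis[OF assms] rcis_divide)

lemma has_real_derivative_Im_Li2_shift_div:
  assumes "d > 0" "x \<noteq> y"
  shows "((\<lambda>t. Im (Li2 (of_real (y - t) / (of_real y - \<i> * of_real d))))
    has_real_derivative (arctan (x / d) - arctan (y / d)) / (y - x)) (at x)"
proof -
  define Y where "Y = Complex y (- d)"
  have Y: "of_real y - \<i> * of_real d = Y" "Y \<noteq> 0"
    using assms by (auto simp: Y_def complex_eq_iff)
  define c where "c = of_real (y - x) / Y"
  have "Im c = (y - x) * d / (y^2 + d^2)"
    by (simp add: c_def Y_def Im_divide power2_eq_square)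
  moreover have "y^2 + d^2 > 0" using assms by (simp add: add_nonneg_pos)
  ultimately have "Im c \<noteq> 0" using assms by simp
  then have c: "c \<in> slit_plane" "c \<noteq> 0" by (auto intro: nonreal_in_slit_plane)
  have dLi: "((\<lambda>z. Li2 ((of_real y - z) / Y)) has_field_derivative - Li2_integrand c * (- 1 / Y))
      (at (of_real x))"
  proof (rule DERIV_chain2[where f = Li2])
    show "(Li2 has_field_derivative - Li2_integrand c) (at ((of_real y - of_real x) / Y))"
      using has_field_derivative_Li2[OF c(1)] by (simp add: c_def)
    show "((\<lambda>z. (of_real y - z) / Y) has_field_derivative - 1 / Y) (at (of_real x))"
      using Y(2) by (auto intro!: derivative_eq_intros simp: field_simps)
  qed
  have "- Li2_integrand c * (- 1 / Y) = Ln (1 - c) / (c * Y)"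
    using c(2) by (simp add: Li2_integrand_def)
  also have "c * Y = of_real (y - x)"
    using Y(2) by (simp add: c_def)
  finally have "((\<lambda>t. Im (Li2 ((of_real y - of_real t) / Y))) has_real_derivative
      Im (Ln (1 - c) / of_real (y - x))) (at x)"
    using has_field_derivative_Im[OF has_vector_derivative_real_field[OF dLi]] by simp
  moreover have "1 - c = (Y - of_real (y - x)) / Y"
    using Y(2) by (simp add: c_def field_simps)
  moreover have "Y - of_real (y - x) = Complex x (- d)"
    by (simp add: Y_def complex_eq_iff)
  moreover have "Complex x (- d) / Complex y (- d) \<noteq> 0"
    using assms by (metis Complex_eq_0 divide_eq_0_iff neg_0_equal_iff_equal order_less_irrefl)
  then have "Im (Ln (Complex x (- d) / Complex y (- d))) = arctan (x / d) - arctan (y / d)"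
    by (metis Arg_eq_Im_Ln Arg_Complex_neg_Im_divide[OF assms(1)])
  ultimately show ?thesis
    using Y by (simp add: Y_def)
qed

lemma has_real_derivative_zfun:
  assumes D: "D > 0" and "y < x"
  shows "((\<lambda>t. zfun D t y) has_real_derivative 4 * D * ln (x - y) / (D^2 + 4 * x^2)) (at x)"
proof -
  define T where "T = arctan (2 * x / D) - arctan (2 * y / D)"
  have half: "u / (D / 2) = 2 * u / D" for u by simp
  have dIm: "((\<lambda>t. Im (Li2 (of_real (y - t) / (of_real y - \<i> * of_real (D / 2)))))
      has_real_derivative T / (y - x)) (at x)"
    using has_real_derivative_Im_Li2_shift_div[of "D / 2" x y, unfolded half] assms by (simp add: T_def)
  have dLn: "((\<lambda>t. 2 * ln (t - y) * (arctan (2 * t / D) - arctan (2 * y / D))) has_real_derivative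
      2 * (1 / (x - y)) * T + 2 * ln (x - y) * (2 / D / (1 + (2 * x / D)^2))) (at x)"
    unfolding T_def using assms by (auto intro!: derivative_eq_intros simp: divide_inverse)
  have "2 * (1 / (x - y)) * T + 2 * (T / (y - x)) = 0"
    using assms by (simp add: field_simps)
  moreover have "2 / D / (1 + (2 * x / D)^2) = 2 * D / (D^2 + 4 * x^2)"
    using D by (simp add: field_simps power2_eq_square)
  ultimately have "2 * (1 / (x - y)) * T + 2 * ln (x - y) * (2 / D / (1 + (2 * x / D)^2)) + 2 * (T / (y - x))
      = 4 * D * ln (x - y) / (D^2 + 4 * x^2)"
    by (simp add: algebra_simps)
  then show ?thesis
    using DERIV_add[OF dLn DERIV_cmult[OF dIm, of 2]] unfolding zfun_def by simp
qed

lemma has_real_derivative_Ffun: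
  assumes D: "D > 0" and h: "h > 0" and hs: "h < s"
  shows "(Ffun D h has_real_derivative s^2 * arctan (D / (2 * s)) / (s^2 - h^2)) (at s)"
proof -
  define K where "K = D^2 + 4 * s^2"
  define T where "T = arctan (D / (2 * s))"
  define L where "L = ln (s - h) - ln (s + h)"
  have s: "s > 0" using h hs by linarith
  have K: "K > 0" using D by (simp add: K_def add_pos_nonneg)
  have E: "s^2 - h^2 > 0" using h hs by (simp add: power_strict_mono)
  have dLn: "((\<lambda>x. D / 4 * ln (D^2 / 4 + x^2)) has_real_derivative D / 4 * (8 * s / K)) (at s)"
    using K unfolding K_def by (auto intro!: derivative_eq_intros simp: add_pos_nonneg field_simps)
  have dT: "((\<lambda>x. arctan (D / (2 * x))) has_real_derivative - 2 * D / K) (at s)"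
    using s K by (auto intro!: derivative_eq_intros simp: K_def field_simps power2_eq_square)
  have dQ: "((\<lambda>x. ln ((x - h) / (x + h))) has_real_derivative 2 * h / (s^2 - h^2)) (at s)"
    using h hs square_diff_square_factored[of s h]
    by (auto intro!: derivative_eq_intros simp: power2_eq_square)
  have dz: "((\<lambda>x. zfun D x h - zfun D x (- h)) has_real_derivative 4 * D * L / K) (at s)"
    using DERIV_diff[OF has_real_derivative_zfun[OF D hs] has_real_derivative_zfun[OF D, of "- h" s]] h hs
    by (simp add: K_def L_def diff_divide_distrib right_diff_distrib)
  have "(Ffun D h has_real_derivative D / 4 * (8 * s / K) + (1 * T + (- 2 * D / K) * s)
      + (h / 2 * (- 2 * D / K) * ln ((s - h) / (s + h)) + 2 * h / (s^2 - h^2) * (h / 2 * T))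
      + h / 4 * (4 * D * L / K)) (at s)"
    unfolding Ffun_def[abs_def] T_def
    by (intro DERIV_add DERIV_mult DERIV_cmult dLn dT dQ dz DERIV_ident)
  also have "ln ((s - h) / (s + h)) = L"
    using h hs by (simp add: L_def ln_div)
  also have "D / 4 * (8 * s / K) + (1 * T + (- 2 * D / K) * s)
      + (h / 2 * (- 2 * D / K) * L + 2 * h / (s^2 - h^2) * (h / 2 * T))
      + h / 4 * (4 * D * L / K) = T + h^2 * T / (s^2 - h^2)"
    using K by (simp add: field_simps power2_eq_square)
  also have "\<dots> = s^2 * T / (s^2 - h^2)"
    using E by (simp add: field_simps)
  finally show ?thesis by (simp add: T_def)
qed

lemma has_real_derivative_ln_sq_primitive:
  assumes "a > 0"
  shows "((\<lambda>y. y * ln (y^2 + a^2) - 2 * y + 2 * a * arctan (y / a)) has_real_derivative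
    ln (x^2 + a^2)) (at x)"
proof -
  have pos: "x^2 + a^2 > 0" using assms by (simp add: add_nonneg_pos)
  have "x * (2 * x / (x^2 + a^2)) - 2 + 2 * a * (1 / a / (1 + (x / a)^2)) = 0"
    using assms pos by (simp add: field_simps power2_eq_square)
  then show ?thesis
    using pos by (auto intro!: derivative_eq_intros simp: divide_inverse algebra_simps)
qed

definition ln_sq_integral :: "real \<Rightarrow> real \<Rightarrow> real" where
  "ln_sq_integral D a = D * ln (D^2 / 4 + a^2) - 2 * D + 4 * a * arctan (D / (2 * a))"

lemma ln_sq_has_integral:
  assumes "a > 0" "D \<ge> 0"
  shows "((\<lambda>y. ln (y^2 + a^2)) has_integral ln_sq_integral D a) {- D / 2..D / 2}"
proof -
  let ?G = "\<lambda>y. y * ln (y^2 + a^2) - 2 * y + 2 * a * arctan (y / a)"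
  have "((\<lambda>y. ln (y^2 + a^2)) has_integral ?G (D / 2) - ?G (- D / 2)) {- D / 2..D / 2}"
    using assms has_real_derivative_ln_sq_primitive[OF assms(1)]
    by (intro fundamental_theorem_of_calculus)
      (auto simp: has_real_derivative_iff_has_vector_derivative[symmetric] intro: has_field_derivative_at_within)
  moreover have "?G (D / 2) - ?G (- D / 2) = ln_sq_integral D a"
    by (simp add: ln_sq_integral_def arctan_minus power_divide field_simps)
  ultimately show ?thesis by simp
qed

lemma log_rate_has_integral:
  assumes "B > 0" "h > 0" "D \<ge> 0"
  shows "((\<lambda>y. log 2 (1 + B / (y^2 + h^2))) has_integral
    (ln_sq_integral D (sqrt (B + h^2)) - ln_sq_integral D h) / ln 2) {- D / 2..D / 2}"
proof -
  define s where "s = sqrt (B + h^2)"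
  have s: "s > 0" "s^2 = B + h^2"
    using assms by (simp_all add: s_def add_pos_nonneg)
  have "log 2 (1 + B / (y^2 + h^2)) = (ln (y^2 + s^2) - ln (y^2 + h^2)) / ln 2" for y
  proof -
    have "y^2 + h^2 > 0" "y^2 + s^2 > 0"
      using assms s by (simp_all add: add_nonneg_pos)
    moreover have "1 + B / (y^2 + h^2) = (y^2 + s^2) / (y^2 + h^2)"
      using s(2) assms(2) by (simp add: divide_simps)
    ultimately show ?thesis
      using s(1) assms(2) by (simp add: log_def ln_div)
  qed
  then show ?thesis
    using has_integral_divide[OF has_integral_diff
        [OF ln_sq_has_integral[OF s(1) assms(3)] ln_sq_has_integral[OF assms(2,3)]], of "ln 2"]
    by (simp add: s_def)
qed

lemma has_real_derivative_Re_Li2_exp: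
  assumes "c < 0"
  shows "((\<lambda>t. Re (Li2 (of_real (c * exp (- \<alpha> * t))))) has_real_derivative
    \<alpha> * ln (1 - c * exp (- \<alpha> * t))) (at t)"
proof -
  define f where "f t = c * exp (- \<alpha> * t)" for t
  have "(f has_real_derivative - \<alpha> * f t) (at t)"
    unfolding f_def by (auto intro!: derivative_eq_intros)
  moreover have "f t < 0" using assms by (simp add: f_def mult_neg_pos)
  ultimately have "((\<lambda>t. Re (Li2 (of_real (f t)))) has_real_derivative
      - (- \<alpha> * f t) * ln (1 - f t) / f t) (at t)"
    by (intro has_real_derivative_Re_Li2_of_real) auto
  moreover have "- (- \<alpha> * f t) * ln (1 - f t) / f t = \<alpha> * ln (1 - f t)"
    using \<open>f t < 0\<close> by simp
  ultimately show ?thesis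
    unfolding f_def by (rule DERIV_cong)
qed

lemma has_real_derivative_Ffun_exp:
  fixes \<alpha> t :: real
  assumes "D > 0" "h > 0" "A > 0"
  defines "s \<equiv> sqrt (A * exp (- \<alpha> * t) + h^2)"
  shows "((\<lambda>t. Ffun D h (sqrt (A * exp (- \<alpha> * t) + h^2))) has_real_derivative
    - \<alpha> * s * arctan (D / (2 * s)) / 2) (at t)"
proof -
  define b where "b = A * exp (- \<alpha> * t)"
  have b: "b > 0" using assms by (simp add: b_def)
  have s: "s > 0" "s^2 = b + h^2"
    using b assms by (simp_all add: s_def b_def add_pos_nonneg)
  then have "h < s"
    using b assms by (smt (verit) power_mono)
  have dF: "(Ffun D h has_real_derivative s^2 * arctan (D / (2 * s)) / b)
      (at (sqrt (A * exp (- \<alpha> * t) + h^2)))"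
    using has_real_derivative_Ffun[OF assms(1,2) \<open>h < s\<close>] s(2) by (simp add: s_def)
  have ds: "((\<lambda>t. sqrt (A * exp (- \<alpha> * t) + h^2)) has_real_derivative - \<alpha> * b / (2 * s)) (at t)"
    using s by (auto intro!: derivative_eq_intros simp: s_def b_def field_simps)
  have "s^2 * arctan (D / (2 * s)) / b * (- \<alpha> * b / (2 * s))
      = - \<alpha> * s * arctan (D / (2 * s)) / 2"
    using s(1) b by (simp add: field_simps power2_eq_square)
  then show ?thesis
    using DERIV_chain2[OF dF ds] by (rule DERIV_cong[rotated])
qed

definition rate_antiderivative :: "real \<Rightarrow> real \<Rightarrow> real \<Rightarrow> real \<Rightarrow> real \<Rightarrow> real" where
  "rate_antiderivative \<alpha> h D A t =
     D / (\<alpha> * ln 2) *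
       (Re (Li2 (complex_of_real (- A * exp (- \<alpha> * t) / (h^2 + D^2 / 4))))
        - Re (Li2 (complex_of_real (- A / (h^2 + D^2 / 4)))))
     - 4 * h * t / ln 2 * arctan (D / (2 * h))
     - 8 / (\<alpha> * ln 2) *
       (Ffun D h (sqrt (A * exp (- \<alpha> * t) + h^2)) - Ffun D h (sqrt (A + h^2)))"

lemma rate_antiderivative_0: "rate_antiderivative \<alpha> h D A 0 = 0"
  by (simp add: rate_antiderivative_def)

lemma has_real_derivative_rate_antiderivative:
  assumes "\<alpha> > 0" "h > 0" "D > 0" "A > 0"
  shows "(rate_antiderivative \<alpha> h D A has_real_derivative
    (ln_sq_integral D (sqrt (A * exp (- \<alpha> * t) + h^2)) - ln_sq_integral D h) / ln 2) (at t)"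
proof -
  define K where "K = h^2 + D^2 / 4"
  define s where "s = sqrt (A * exp (- \<alpha> * t) + h^2)"
  have K: "K > 0" using assms by (simp add: K_def add_pos_nonneg)
  have s: "s > 0" "s^2 = A * exp (- \<alpha> * t) + h^2"
    using assms by (simp_all add: s_def add_pos_nonneg)
  have "- A * exp (- \<alpha> * t) / K = (- A / K) * exp (- \<alpha> * t)" for t by simp
  then have dLi2: "((\<lambda>t. Re (Li2 (of_real (- A * exp (- \<alpha> * t) / K)))) has_real_derivative
      \<alpha> * ln (1 - (- A / K) * exp (- \<alpha> * t))) (at t)"
    using has_real_derivative_Re_Li2_exp[of "- A / K" \<alpha> t] assms K by (simp add: divide_neg_pos)
  have d: "(rate_antiderivative \<alpha> h D A has_real_derivative
      D / (\<alpha> * ln 2) * (\<alpha> * ln (1 - (- A / K) * exp (- \<alpha> * t)) - 0)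
      - 4 * h * 1 / ln 2 * arctan (D / (2 * h))
      - 8 / (\<alpha> * ln 2) * (- \<alpha> * s * arctan (D / (2 * s)) / 2 - 0)) (at t)"
    unfolding rate_antiderivative_def K_def[symmetric] s_def
    by (intro DERIV_diff DERIV_cmult DERIV_cmult_right DERIV_cdivide DERIV_const DERIV_ident dLi2
        has_real_derivative_Ffun_exp assms)
  have ln_ratio: "ln (1 - (- A / K) * exp (- \<alpha> * t)) = ln (D^2 / 4 + s^2) - ln (D^2 / 4 + h^2)"
  proof -
    have "1 - (- A / K) * exp (- \<alpha> * t) = (D^2 / 4 + s^2) / (D^2 / 4 + h^2)"
      using K s(2) by (simp add: K_def field_simps)
    moreover have "D^2 / 4 + s^2 > 0" "D^2 / 4 + h^2 > 0"
      using s(1) assms(2) by (simp_all add: add_nonneg_pos)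
    ultimately show ?thesis by (simp add: ln_div)
  qed
  have "D / (\<alpha> * ln 2) * (\<alpha> * ln (1 - (- A / K) * exp (- \<alpha> * t)) - 0)
      - 4 * h * 1 / ln 2 * arctan (D / (2 * h))
      - 8 / (\<alpha> * ln 2) * (- \<alpha> * s * arctan (D / (2 * s)) / 2 - 0)
      = (ln_sq_integral D s - ln_sq_integral D h) / ln 2"
    unfolding ln_ratio using assms by (simp add: ln_sq_integral_def field_simps)
  from DERIV_cong[OF d this] show ?thesis
    by (simp only: s_def)
qed

lemma has_integral_rate_antiderivative:
  assumes "\<alpha> > 0" "h > 0" "D > 0" "A > 0" "X \<ge> 0"
  shows "((\<lambda>x. (ln_sq_integral D (sqrt (A * exp (- \<alpha> * x) + h^2)) - ln_sq_integral D h) / ln 2)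
    has_integral rate_antiderivative \<alpha> h D A X) {0..X}"
proof -
  have "((\<lambda>x. (ln_sq_integral D (sqrt (A * exp (- \<alpha> * x) + h^2)) - ln_sq_integral D h) / ln 2)
      has_integral rate_antiderivative \<alpha> h D A X - rate_antiderivative \<alpha> h D A 0) {0..X}"
    using has_real_derivative_rate_antiderivative[OF assms(1-4)] assms(5)
    by (intro fundamental_theorem_of_calculus)
      (auto simp: has_real_derivative_iff_has_vector_derivative[symmetric] intro: has_field_derivative_at_within)
  then show ?thesis by (simp add: rate_antiderivative_0)
qed

lemma integral_interval_Times_continuous:
  fixes f :: "real \<times> real \<Rightarrow> 'c::banach"
  assumes "continuous_on ({a..b} \<times> {c..d}) f"
  shows "integral ({a..b} \<times> {c..d}) f = integral {a..b} (\<lambda>x. integral {c..d} (\<lambda>y. f (x, y)))"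
  using integral_prod_continuous[of a c b d f, unfolded cbox_Pair_eq] assms by (simp add: cbox_interval)

theorem proposition3:
  fixes \<alpha> h Dx Dy A :: real
  assumes "\<alpha> > 0" "h > 0" "Dx > 0" "Dy > 0" "A > 0"
  shows "(1 / (Dx * Dy)) * integral ({0..Dx} \<times> {-Dy/2..Dy/2})
            (\<lambda>(xm, ym). log 2 (1 + A * exp (- \<alpha> * xm) / (ym^2 + h^2)))
       = (1 / (Dx * Dy)) *
          ( Dy / (\<alpha> * ln 2) *
              (Re (Li2 (complex_of_real (- A * exp (- \<alpha> * Dx) / (h^2 + Dy^2 / 4))))
               - Re (Li2 (complex_of_real (- A / (h^2 + Dy^2 / 4)))))
          - 4 * h * Dx / ln 2 * arctan (Dy / (2 * h))
          - 8 / (\<alpha> * ln 2) *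
              (Ffun Dy h (sqrt (A * exp (- \<alpha> * Dx) + h^2)) - Ffun Dy h (sqrt (A + h^2))))"
proof -
  have nonzero: "1 + A * exp (- (\<alpha> * x)) / (y^2 + h^2) \<noteq> 0" for x y
  proof -
    have "y^2 + h^2 > 0" using assms by (simp add: add_nonneg_pos)
    then have "A * exp (- (\<alpha> * x)) / (y^2 + h^2) > 0" using assms by simp
    then show ?thesis by linarith
  qed
  have "continuous_on ({0..Dx} \<times> {-Dy/2..Dy/2})
      (\<lambda>(xm, ym). log 2 (1 + A * exp (- \<alpha> * xm) / (ym^2 + h^2)))"
    using assms nonzero by (auto simp: case_prod_unfold add_nonneg_pos intro!: continuous_intros)
  then have "integral ({0..Dx} \<times> {-Dy/2..Dy/2}) (\<lambda>(xm, ym). log 2 (1 + A * exp (- \<alpha> * xm) / (ym^2 + h^2)))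
      = integral {0..Dx} (\<lambda>x. integral {-Dy/2..Dy/2} (\<lambda>y. log 2 (1 + A * exp (- \<alpha> * x) / (y^2 + h^2))))"
    by (simp add: integral_interval_Times_continuous)
  also have "\<dots> = integral {0..Dx}
      (\<lambda>x. (ln_sq_integral Dy (sqrt (A * exp (- \<alpha> * x) + h^2)) - ln_sq_integral Dy h) / ln 2)"
    using assms log_rate_has_integral[of "A * exp (- \<alpha> * _)" h Dy]
    by (intro integral_cong integral_unique) simp
  also have "\<dots> = rate_antiderivative \<alpha> h Dy A Dx"
    using assms by (intro integral_unique has_integral_rate_antiderivative) auto
  finally show ?thesis
    by (simp add: rate_antiderivative_def)
qed

end
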